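(* Let $(\Omega,\mathcal F)$ be one of $(\{1,\dots,n\},2^{\{1,\dots,n\}})$, $(\mathbb N,2^{\mathbb N})$, or $([0,1],\mathcal B([0,1]))$, let $\mathcal X$ be the set of bounded measurable functions on it, and let $v$ be a continuous binary capacity. Then $I_v$ is convex on $\mathcal X$ if and only if there exists a finite set $A\subseteq\Omega$ such that $I_v(X)=\max_{\omega\in A}X(\omega)$ for all $X\in\mathcal X$.
   Context: A binary capacity is an increasing function $v:\mathcal F\to\{0,1\}$ (i.e. $v(A)\le v(B)$ for $A\subseteq B$) with $v(\varnothing)=0$, $v(\Omega)=1$; it is continuous if $v(A_n)\to0$ whenever $A_n\in\mathcal F$ decrease to $\varnothing$. $I_v(X)=\int_{-\infty}^0(v(X\ge x)-1)\,\mathrm dx+\int_0^\infty v(X\ge x)\,\mathrm dx$. Convexity means $I_v(\lambda X+(1-\lambda)Y)\le\lambda I_v(X)+(1-\lambda)I_v(Y)$ for all $\lambda\in[0,1]$, $X,Y\in\mathcal X$. *)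

theory Defs
  imports "HOL-Analysis.Analysis"
begin

definition binary_capacity :: "'a measure \<Rightarrow> ('a set \<Rightarrow> real) \<Rightarrow> bool" where
  "binary_capacity M v \<longleftrightarrow>
     (\<forall>A\<in>sets M. v A \<in> {0, 1}) \<and>
     (\<forall>A\<in>sets M. \<forall>B\<in>sets M. A \<subseteq> B \<longrightarrow> v A \<le> v B) \<and>
     v {} = 0 \<and> v (space M) = 1"

definition continuous_capacity :: "'a measure \<Rightarrow> ('a set \<Rightarrow> real) \<Rightarrow> bool" where
  "continuous_capacity M v \<longleftrightarrow>
     (\<forall>A :: nat \<Rightarrow> 'a set. (\<forall>n. A n \<in> sets M) \<longrightarrow> decseq A \<longrightarrow> (\<Inter>n. A n) = {}
        \<longrightarrow> (\<lambda>n. v (A n)) \<longlonglongrightarrow> 0)"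

definition bdd_meas :: "'a measure \<Rightarrow> ('a \<Rightarrow> real) set" where
  "bdd_meas M = {X. X \<in> borel_measurable M \<and> bounded (X ` space M)}"

definition choquet :: "'a measure \<Rightarrow> ('a set \<Rightarrow> real) \<Rightarrow> ('a \<Rightarrow> real) \<Rightarrow> real" where
  "choquet M v X =
     (LINT x:{..0}|lborel. v {\<omega>\<in>space M. X \<omega> \<ge> x} - 1) +
     (LINT x:{0..}|lborel. v {\<omega>\<in>space M. X \<omega> \<ge> x})"

definition choquet_convex :: "'a measure \<Rightarrow> ('a set \<Rightarrow> real) \<Rightarrow> bool" where
  "choquet_convex M v \<longleftrightarrow>
     (\<forall>X\<in>bdd_meas M. \<forall>Y\<in>bdd_meas M. \<forall>t::real. 0 \<le> t \<and> t \<le> 1 \<longrightarrow>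
        choquet M v (\<lambda>\<omega>. t * X \<omega> + (1 - t) * Y \<omega>)
          \<le> t * choquet M v X + (1 - t) * choquet M v Y)"

definition max_representable :: "'a measure \<Rightarrow> ('a set \<Rightarrow> real) \<Rightarrow> bool" where
  "max_representable M v \<longleftrightarrow>
     (\<exists>A. finite A \<and> A \<noteq> {} \<and> A \<subseteq> space M \<and>
        (\<forall>X\<in>bdd_meas M. choquet M v X = Max (X ` A)))"

end

theory Submission
  imports Defs
begin

text \<open>For a binary capacity, \<open>I\<^sub>v(X)\<close> is the threshold \<open>c\<close> with \<open>v{X \<ge> x} = 1\<close> for \<open>x < c\<close>
  and \<open>= 0\<close> for \<open>x > c\<close>. Convexity of \<open>I\<^sub>v\<close> forces the null sets of \<open>v\<close> to be closed under
  finite unions: for null \<open>A\<close>, \<open>B\<close> with \<open>v(A \<union> B) = 1\<close>, the midpoint of \<open>1\<^sub>A\<close> and \<open>1\<^sub>B\<close> has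
  Choquet integral \<open>1/2\<close>. Continuity then shows that there are only finitely many atoms
  (points \<open>\<omega>\<close> with \<open>v{\<omega>} = 1\<close>), and, by enumerating a countable set or by covering a compact
  one with finitely many null neighbourhoods, that every set without atoms is null. Hence
  \<open>v(A) = 1\<close> iff \<open>A\<close> meets the finite set of atoms, and then \<open>I\<^sub>v(X)\<close> is the maximum of \<open>X\<close>
  over the atoms. Conversely a maximum over a finite set is convex.\<close>

definition capacity_atoms :: "'a measure \<Rightarrow> ('a set \<Rightarrow> real) \<Rightarrow> 'a set" where
  "capacity_atoms M v = {\<omega>\<in>space M. v {\<omega>} = 1}"

definition capacity_nulls_union_closed :: "'a measure \<Rightarrow> ('a set \<Rightarrow> real) \<Rightarrow> bool" where
  "capacity_nulls_union_closed M v \<longleftrightarrow>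
     (\<forall>A\<in>sets M. \<forall>B\<in>sets M. v A = 0 \<longrightarrow> v B = 0 \<longrightarrow> v (A \<union> B) = 0)"

lemma binary_capacity_zero_or_one:
  "binary_capacity M v \<Longrightarrow> A \<in> sets M \<Longrightarrow> v A = 0 \<or> v A = 1"
  unfolding binary_capacity_def by auto

lemma binary_capacity_subset_null:
  "binary_capacity M v \<Longrightarrow> A \<in> sets M \<Longrightarrow> B \<in> sets M \<Longrightarrow> A \<subseteq> B \<Longrightarrow> v B = 0 \<Longrightarrow> v A = 0"
  unfolding binary_capacity_def by (smt (verit) insert_iff singletonD)

lemma binary_capacity_superset_one:
  "binary_capacity M v \<Longrightarrow> A \<in> sets M \<Longrightarrow> B \<in> sets M \<Longrightarrow> A \<subseteq> B \<Longrightarrow> v A = 1 \<Longrightarrow> v B = 1"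
  unfolding binary_capacity_def by (smt (verit) insert_iff singletonD)

lemma bdd_meas_linear_combination:
  assumes "X \<in> bdd_meas M" "Y \<in> bdd_meas M"
  shows "(\<lambda>\<omega>. a * X \<omega> + b * Y \<omega>) \<in> bdd_meas M"
proof -
  have "bounded ((\<lambda>\<omega>. a *\<^sub>R X \<omega> + b *\<^sub>R Y \<omega>) ` space M)"
    using assms unfolding bdd_meas_def by (intro bounded_plus_comp bounded_scaleR_comp) auto
  then show ?thesis
    using assms unfolding bdd_meas_def by auto
qed

lemma indicator_in_bdd_meas:
  assumes "C \<in> sets M"
  shows "indicator C \<in> bdd_meas M"
proof -
  have "\<bar>indicator C \<omega> :: real\<bar> \<le> 1" for \<omega>
    by (simp split: split_indicator)
  then show ?thesis
    using assms unfolding bdd_meas_def bounded_iff by auto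
qed

lemma signed_tail_integrals_step:
  fixes c :: real and g :: "real \<Rightarrow> real"
  assumes g: "\<And>x. x < c \<Longrightarrow> g x = 1" "\<And>x. c < x \<Longrightarrow> g x = 0"
  shows "(LINT x:{..0}|lborel. g x - 1) + (LINT x:{0..}|lborel. g x) = c"
proof -
  \<comment> \<open>\<open>g\<close> is not assumed measurable, but it equals this measurable step function \<open>h\<close>.\<close>
  define h where "h = (\<lambda>x. if x = c then g c else if x < c then 1 else (0::real))"
  have "g = h"
    using g by (auto simp: fun_eq_iff h_def)
  have [measurable]: "h \<in> borel_measurable borel"
    unfolding h_def by measurable
  have integral_cong_off_c: "integral\<^sup>L lborel f = integral\<^sup>L lborel f'"
    if "f \<in> borel_measurable lborel" "f' \<in> borel_measurable lborel" "\<And>x. x \<noteq> c \<Longrightarrow> f x = f' x"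
    for f f' :: "real \<Rightarrow> real"
    using that AE_lborel_singleton[of c] by (intro integral_cong_AE) (auto elim!: eventually_mono)
  show ?thesis
  proof (cases "0 \<le> c")
    case True
    have "integral\<^sup>L lborel (\<lambda>x. indicator {..0} x *\<^sub>R (h x - 1)) = integral\<^sup>L lborel (\<lambda>x::real. 0::real)"
      by (rule integral_cong_off_c, measurable, measurable)
         (use True in \<open>auto simp: h_def split: split_indicator\<close>)
    moreover have "integral\<^sup>L lborel (\<lambda>x. indicator {0..} x *\<^sub>R h x) = integral\<^sup>L lborel (indicator {0..c})"
      by (rule integral_cong_off_c, measurable, measurable)
         (use True in \<open>auto simp: h_def split: split_indicator\<close>)
    ultimately show ?thesis
      using True unfolding set_lebesgue_integral_def \<open>g = h\<close> by (simp add: measure_def)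
  next
    case False
    have "integral\<^sup>L lborel (\<lambda>x. indicator {..0} x *\<^sub>R (h x - 1)) = integral\<^sup>L lborel (\<lambda>x. - indicator {c..0} x::real)"
      by (rule integral_cong_off_c, measurable, measurable)
         (use False in \<open>auto simp: h_def split: split_indicator\<close>)
    moreover have "integral\<^sup>L lborel (\<lambda>x. indicator {0..} x *\<^sub>R h x) = integral\<^sup>L lborel (\<lambda>x::real. 0::real)"
      by (rule integral_cong_off_c, measurable, measurable)
         (use False in \<open>auto simp: h_def split: split_indicator\<close>)
    ultimately show ?thesis
      using False unfolding set_lebesgue_integral_def \<open>g = h\<close> by (simp add: measure_def)
  qed
qed

lemma choquet_eqI:
  assumes "\<And>x. x < c \<Longrightarrow> v {\<omega>\<in>space M. x \<le> X \<omega>} = 1"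
    and "\<And>x. c < x \<Longrightarrow> v {\<omega>\<in>space M. x \<le> X \<omega>} = 0"
  shows "choquet M v X = c"
  unfolding choquet_def by (rule signed_tail_integrals_step) (use assms in auto)

lemma choquet_indicator:
  assumes bin: "binary_capacity M v" and C: "C \<in> sets M"
  shows "choquet M v (indicator C) = v C"
proof (rule choquet_eqI)
  have level: "{\<omega>\<in>space M. x \<le> indicator C \<omega>} = (if x \<le> 0 then space M else if x \<le> 1 then C else {})"
    for x :: real
    using sets.sets_into_space[OF C] by (auto split: split_indicator)
  have "v {} = 0" "v (space M) = 1"
    using bin unfolding binary_capacity_def by auto
  then show "v {\<omega>\<in>space M. x \<le> indicator C \<omega>} = 1" if "x < v C" for x
    using that binary_capacity_zero_or_one[OF bin C] by (auto simp: level)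
  show "v {\<omega>\<in>space M. x \<le> indicator C \<omega>} = 0" if "v C < x" for x
    using that binary_capacity_zero_or_one[OF bin C] \<open>v {} = 0\<close> by (auto simp: level)
qed

lemma choquet_convexD:
  "choquet_convex M v \<Longrightarrow> X \<in> bdd_meas M \<Longrightarrow> Y \<in> bdd_meas M \<Longrightarrow> 0 \<le> t \<Longrightarrow> t \<le> 1 \<Longrightarrow>
    choquet M v (\<lambda>\<omega>. t * X \<omega> + (1 - t) * Y \<omega>) \<le> t * choquet M v X + (1 - t) * choquet M v Y"
  unfolding choquet_convex_def by blast

lemma max_representable_imp_choquet_convex:
  assumes "max_representable M v"
  shows "choquet_convex M v"
proof -
  obtain S where S: "finite S" "S \<noteq> {}"
    and rep: "\<And>X. X \<in> bdd_meas M \<Longrightarrow> choquet M v X = Max (X ` S)"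
    using assms unfolding max_representable_def by blast
  show ?thesis
    unfolding choquet_convex_def
  proof (intro ballI allI impI)
    fix X Y and t :: real
    assume X: "X \<in> bdd_meas M" and Y: "Y \<in> bdd_meas M" and t: "0 \<le> t \<and> t \<le> 1"
    let ?Z = "\<lambda>\<omega>. t * X \<omega> + (1 - t) * Y \<omega>"
    have "Max (?Z ` S) \<in> ?Z ` S"
      using S by simp
    then obtain \<omega> where "\<omega> \<in> S" and \<omega>: "Max (?Z ` S) = ?Z \<omega>"
      by blast
    then have "X \<omega> \<le> Max (X ` S)" "Y \<omega> \<le> Max (Y ` S)"
      using S by auto
    then have "Max (?Z ` S) \<le> t * Max (X ` S) + (1 - t) * Max (Y ` S)"
      unfolding \<omega> using t by (intro add_mono mult_left_mono) auto
    then show "choquet M v ?Z \<le> t * choquet M v X + (1 - t) * choquet M v Y"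
      using rep X Y bdd_meas_linear_combination[OF X Y] by simp
  qed
qed

lemma choquet_convex_imp_nulls_union_closed:
  assumes bin: "binary_capacity M v" and cv: "choquet_convex M v"
  shows "capacity_nulls_union_closed M v"
  unfolding capacity_nulls_union_closed_def
proof (intro ballI impI; rule ccontr)
  fix A B assume A: "A \<in> sets M" and B: "B \<in> sets M" and "v A = 0" "v B = 0" "v (A \<union> B) \<noteq> 0"
  then have "v (A \<union> B) = 1"
    using binary_capacity_zero_or_one[OF bin] by blast
  let ?Z = "\<lambda>\<omega>. 1/2 * indicator A \<omega> + (1 - 1/2) * indicator B \<omega> :: real"
  have level_measurable: "{\<omega>\<in>space M. x \<le> ?Z \<omega>} \<in> sets M" for x
    using A B by measurable
  have "choquet M v ?Z = 1/2"
  proof (rule choquet_eqI)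
    fix x :: real assume "x < 1/2"
    then have "A \<union> B \<subseteq> {\<omega>\<in>space M. x \<le> ?Z \<omega>}"
      using sets.sets_into_space[OF A] sets.sets_into_space[OF B] by (auto split: split_indicator)
    then show "v {\<omega>\<in>space M. x \<le> ?Z \<omega>} = 1"
      using binary_capacity_superset_one[OF bin _ level_measurable] A B \<open>v (A \<union> B) = 1\<close> by blast
  next
    fix x :: real assume "1/2 < x"
    then have "{\<omega>\<in>space M. x \<le> ?Z \<omega>} \<subseteq> A"
      by (auto split: split_indicator)
    then show "v {\<omega>\<in>space M. x \<le> ?Z \<omega>} = 0"
      using binary_capacity_subset_null[OF bin level_measurable A] \<open>v A = 0\<close> by blast
  qed
  moreover have "choquet M v ?Z \<le> 1/2 * choquet M v (indicator A) + (1 - 1/2) * choquet M v (indicator B)"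
    by (rule choquet_convexD[OF cv]) (simp_all add: indicator_in_bdd_meas A B)
  ultimately show False
    using choquet_indicator[OF bin] A B \<open>v A = 0\<close> \<open>v B = 0\<close> by simp
qed

lemma continuous_capacity_eventually_null:
  assumes bin: "binary_capacity M v" and cont: "continuous_capacity M v"
    and A: "\<And>n. A n \<in> sets M" "decseq A" "(\<Inter>n. A n) = {}"
  shows "\<exists>n. v (A n) = 0"
proof -
  have "(\<lambda>n. v (A n)) \<longlonglongrightarrow> 0"
    using cont A unfolding continuous_capacity_def by blast
  then have "eventually (\<lambda>n. \<bar>v (A n)\<bar> < 1) sequentially"
    by (auto dest: tendstoD[of _ 0 _ 1] simp: dist_real_def)
  then obtain n where "\<bar>v (A n)\<bar> < 1"
    by (meson eventually_sequentially order_refl)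
  then have "v (A n) = 0"
    using binary_capacity_zero_or_one[OF bin A(1)[of n]] by auto
  then show ?thesis ..
qed

lemma capacity_nulls_union_closed_finite_UN:
  assumes bin: "binary_capacity M v" and closed: "capacity_nulls_union_closed M v"
    and "finite I" and "\<And>i. i \<in> I \<Longrightarrow> B i \<in> sets M" and "\<And>i. i \<in> I \<Longrightarrow> v (B i) = 0"
  shows "v (\<Union>i\<in>I. B i) = 0"
  using assms(3-5)
proof (induction I rule: finite_induct)
  case empty
  then show ?case
    using bin unfolding binary_capacity_def by simp
next
  case (insert i I)
  then show ?case
    using closed unfolding capacity_nulls_union_closed_def by (simp add: sets.finite_UN)
qed

text \<open>Infinitely many atoms would give a decreasing sequence of tails, each containing an atom,
  with empty intersection.\<close>
lemma finite_capacity_atoms: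
  assumes bin: "binary_capacity M v" and cont: "continuous_capacity M v"
    and countable_sets: "\<And>C. C \<subseteq> space M \<Longrightarrow> countable C \<Longrightarrow> C \<in> sets M"
  shows "finite (capacity_atoms M v)"
proof (rule ccontr)
  assume "infinite (capacity_atoms M v)"
  then obtain f :: "nat \<Rightarrow> _" where "inj f" and f: "range f \<subseteq> capacity_atoms M v"
    using infinite_countable_subset by blast
  define T where "T n = f ` {n..}" for n
  have T: "T n \<in> sets M" for n
    using f by (intro countable_sets) (auto simp: T_def capacity_atoms_def)
  have "decseq T"
    unfolding T_def decseq_def by (simp add: image_mono)
  moreover have "(\<Inter>n. T n) = {}"
  proof -
    have "f n \<notin> T (Suc n)" for n
      using \<open>inj f\<close> by (auto simp: T_def inj_eq)
    then show ?thesis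
      unfolding T_def by blast
  qed
  ultimately obtain n where "v (T n) = 0"
    using continuous_capacity_eventually_null[OF bin cont, of T] T by blast
  moreover have "f n \<in> capacity_atoms M v"
    using f by blast
  then have "{f n} \<in> sets M" "v {f n} = 1"
    by (auto intro: countable_sets simp: capacity_atoms_def)
  moreover have "{f n} \<subseteq> T n"
    by (simp add: T_def)
  ultimately show False
    using binary_capacity_superset_one[OF bin _ T] by fastforce
qed

lemma points_null_imp_null_countable:
  assumes bin: "binary_capacity M v" and cont: "continuous_capacity M v"
    and closed: "capacity_nulls_union_closed M v"
    and "countable A" and A: "A \<in> sets M"
    and points: "\<And>\<omega>. \<omega> \<in> A \<Longrightarrow> {\<omega>} \<in> sets M" "\<And>\<omega>. \<omega> \<in> A \<Longrightarrow> v {\<omega>} = 0"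
  shows "v A = 0"
proof (cases "A = {}")
  case True
  then show ?thesis
    using bin unfolding binary_capacity_def by simp
next
  case False
  define F where "F n = (\<Union>i<n. {from_nat_into A i})" for n
  define T where "T n = A - F n" for n
  have e: "from_nat_into A i \<in> A" for i
    using False by (rule from_nat_into)
  have F: "F n \<in> sets M" for n
    unfolding F_def using e points(1) by (intro sets.finite_UN) auto
  have F_null: "v (F n) = 0" for n
    unfolding F_def using e points by (intro capacity_nulls_union_closed_finite_UN[OF bin closed]) auto
  have T: "T n \<in> sets M" for n
    unfolding T_def using A F by (rule sets.Diff)
  have "F m \<subseteq> F n" if "m \<le> n" for m n
    unfolding F_def using that by (intro UN_mono) auto
  then have "decseq T"
    unfolding T_def decseq_def by blast
  moreover have "(\<Inter>n. T n) = {}"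
  proof -
    have "x \<notin> T (Suc (to_nat_on A x))" for x
      using from_nat_into_to_nat_on[OF \<open>countable A\<close>, of x]
      by (auto simp: T_def F_def intro!: bexI[of _ "to_nat_on A x"])
    then show ?thesis
      by blast
  qed
  ultimately obtain n where "v (T n) = 0"
    using continuous_capacity_eventually_null[OF bin cont, of T] T by blast
  then have "v (T n \<union> F n) = 0"
    using closed T F F_null unfolding capacity_nulls_union_closed_def by blast
  moreover have "A \<subseteq> T n \<union> F n"
    unfolding T_def by blast
  ultimately show ?thesis
    by (intro binary_capacity_subset_null[OF bin A sets.Un[OF T F]])
qed

lemma capacity_null_in_ball:
  fixes K :: "'a::metric_space set"
  defines "M \<equiv> restrict_space borel K"
  assumes "K \<in> sets borel" and bin: "binary_capacity M v" and cont: "continuous_capacity M v"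
    and closed: "capacity_nulls_union_closed M v"
    and A: "A \<in> sets M" and points: "\<And>\<omega>. \<omega> \<in> A \<Longrightarrow> v {\<omega>} = 0"
  shows "\<exists>r>0. v (A \<inter> ball p r) = 0"
proof -
  have sets_M: "C \<in> sets M \<longleftrightarrow> C \<subseteq> K \<and> C \<in> sets borel" for C
    unfolding M_def using \<open>K \<in> sets borel\<close> by (simp add: sets_restrict_space_iff)
  define C where "C n = A \<inter> ball p (1 / Suc n) - {p}" for n :: nat
  have C: "C n \<in> sets M" for n
    using A unfolding C_def sets_M by auto
  have "ball p (1 / Suc n) \<subseteq> ball p (1 / Suc m)" if "m \<le> n" for m n
    using that by (intro subset_ball) (simp add: frac_le)
  then have "decseq C"
    unfolding C_def decseq_def by blast
  moreover have "(\<Inter>n. C n) = {}"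
  proof -
    have "x \<notin> (\<Inter>n. C n)" for x
    proof (cases "x = p")
      case False
      then have "0 < dist p x"
        by simp
      then obtain n where "1 / Suc n < dist p x"
        by (rule nat_approx_posE)
      then have "x \<notin> C n"
        by (simp add: C_def)
      then show ?thesis
        by blast
    qed (simp add: C_def)
    then show ?thesis
      by blast
  qed
  ultimately obtain n where "v (C n) = 0"
    using continuous_capacity_eventually_null[OF bin cont, of C] C by blast
  have ball_n: "A \<inter> ball p (1 / Suc n) \<in> sets M"
    using A unfolding sets_M by auto
  have "v (A \<inter> ball p (1 / Suc n)) = 0"
  proof (cases "p \<in> A")
    case False
    then have "A \<inter> ball p (1 / Suc n) = C n"
      by (auto simp: C_def)
    with \<open>v (C n) = 0\<close> show ?thesis
      by simp
  next
    case True
    then have p: "{p} \<in> sets M" "v {p} = 0"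
      using A points unfolding sets_M by (auto intro: borel_singleton)
    then have "v (C n \<union> {p}) = 0"
      using closed C \<open>v (C n) = 0\<close> unfolding capacity_nulls_union_closed_def by blast
    moreover have "A \<inter> ball p (1 / Suc n) \<subseteq> C n \<union> {p}"
      by (auto simp: C_def)
    ultimately show ?thesis
      by (intro binary_capacity_subset_null[OF bin ball_n sets.Un[OF C p(1)]])
  qed
  then show ?thesis
    by (intro exI[of _ "1 / Suc n"]) auto
qed

lemma points_null_imp_null_compact:
  fixes K :: "'a::metric_space set"
  defines "M \<equiv> restrict_space borel K"
  assumes "compact K" and bin: "binary_capacity M v" and cont: "continuous_capacity M v"
    and closed: "capacity_nulls_union_closed M v"
    and A: "A \<in> sets M" and points: "\<And>\<omega>. \<omega> \<in> A \<Longrightarrow> v {\<omega>} = 0"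
  shows "v A = 0"
proof -
  have K: "K \<in> sets borel"
    using \<open>compact K\<close> by (simp add: compact_imp_closed)
  have sets_M: "C \<in> sets M \<longleftrightarrow> C \<subseteq> K \<and> C \<in> sets borel" for C
    unfolding M_def using K by (simp add: sets_restrict_space_iff)
  have "\<forall>p. \<exists>r>0. v (A \<inter> ball p r) = 0"
    using capacity_null_in_ball[OF K bin[unfolded M_def] cont[unfolded M_def]
        closed[unfolded M_def] A[unfolded M_def] points] by blast
  then obtain r where r: "\<And>p. r p > 0" "\<And>p. v (A \<inter> ball p (r p)) = 0"
    using choice[of "\<lambda>p r. r > 0 \<and> v (A \<inter> ball p r) = 0"] by blast
  have "K \<subseteq> (\<Union>p\<in>K. ball p (r p))"
    using r(1) by force
  then obtain P where "finite P" and P: "K \<subseteq> (\<Union>p\<in>P. ball p (r p))"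
    by (rule compactE_image[OF \<open>compact K\<close> open_ball])
  have balls: "A \<inter> ball p (r p) \<in> sets M" for p
    using A unfolding sets_M by auto
  have "(\<Union>p\<in>P. A \<inter> ball p (r p)) \<in> sets M"
    using \<open>finite P\<close> balls by (rule sets.finite_UN)
  moreover have "v (\<Union>p\<in>P. A \<inter> ball p (r p)) = 0"
    by (rule capacity_nulls_union_closed_finite_UN[OF bin closed \<open>finite P\<close> balls r(2)])
  moreover have "A \<subseteq> (\<Union>p\<in>P. A \<inter> ball p (r p))"
    using P A unfolding sets_M by blast
  ultimately show ?thesis
    by (intro binary_capacity_subset_null[OF bin A])
qed

lemma max_representableI:
  assumes S: "finite S" "S \<noteq> {}" "S \<subseteq> space M"
    and v: "\<And>A. A \<in> sets M \<Longrightarrow> v A = (if A \<inter> S = {} then 0 else 1)"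
  shows "max_representable M v"
  unfolding max_representable_def
proof (intro exI conjI ballI)
  fix X assume "X \<in> bdd_meas M"
  then have [measurable]: "X \<in> borel_measurable M"
    by (simp add: bdd_meas_def)
  have level: "{\<omega>\<in>space M. x \<le> X \<omega>} \<in> sets M" for x
    by measurable
  have "Max (X ` S) \<in> X ` S"
    using S by simp
  then obtain s where "s \<in> S" and s: "X s = Max (X ` S)"
    by auto
  show "choquet M v X = Max (X ` S)"
  proof (rule choquet_eqI)
    fix x assume "x < Max (X ` S)"
    then have "s \<in> {\<omega>\<in>space M. x \<le> X \<omega>} \<inter> S"
      using s \<open>s \<in> S\<close> S(3) by auto
    then show "v {\<omega>\<in>space M. x \<le> X \<omega>} = 1"
      using v[OF level] by auto
  next
    fix x assume "Max (X ` S) < x"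
    moreover have "X s' \<le> Max (X ` S)" if "s' \<in> S" for s'
      using S(1) that by simp
    ultimately have "{\<omega>\<in>space M. x \<le> X \<omega>} \<inter> S = {}"
      by force
    then show "v {\<omega>\<in>space M. x \<le> X \<omega>} = 0"
      using v[OF level] by auto
  qed
qed (use S in auto)

lemma binary_capacity_eq_atoms:
  assumes bin: "binary_capacity M v"
    and points_measurable: "\<And>\<omega>. \<omega> \<in> space M \<Longrightarrow> {\<omega>} \<in> sets M"
    and points_null_imp_null: "\<And>A. A \<in> sets M \<Longrightarrow> (\<And>\<omega>. \<omega> \<in> A \<Longrightarrow> v {\<omega>} = 0) \<Longrightarrow> v A = 0"
    and A: "A \<in> sets M"
  shows "v A = (if A \<inter> capacity_atoms M v = {} then 0 else 1)"
proof (cases "A \<inter> capacity_atoms M v = {}")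
  case True
  have "v {\<omega>} = 0" if "\<omega> \<in> A" for \<omega>
  proof -
    have "\<omega> \<in> space M" "\<omega> \<notin> capacity_atoms M v"
      using that True sets.sets_into_space[OF A] by auto
    then show ?thesis
      using binary_capacity_zero_or_one[OF bin points_measurable] by (auto simp: capacity_atoms_def)
  qed
  then show ?thesis
    using points_null_imp_null[OF A] True by simp
next
  case False
  then obtain \<omega> where "\<omega> \<in> A" "\<omega> \<in> capacity_atoms M v"
    by blast
  then have "{\<omega>} \<in> sets M" "v {\<omega>} = 1"
    using points_measurable by (auto simp: capacity_atoms_def)
  then have "v A = 1"
    using \<open>\<omega> \<in> A\<close> by (intro binary_capacity_superset_one[OF bin _ A]) auto
  then show ?thesis
    using False by simp
qed

lemma choquet_convex_iff_max_representable:
  assumes bin: "binary_capacity M v" and cont: "continuous_capacity M v"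
    and countable_sets: "\<And>C. C \<subseteq> space M \<Longrightarrow> countable C \<Longrightarrow> C \<in> sets M"
    and points_null_imp_null: "\<And>A. capacity_nulls_union_closed M v \<Longrightarrow> A \<in> sets M \<Longrightarrow>
      (\<And>\<omega>. \<omega> \<in> A \<Longrightarrow> v {\<omega>} = 0) \<Longrightarrow> v A = 0"
  shows "choquet_convex M v \<longleftrightarrow> max_representable M v"
proof
  assume "choquet_convex M v"
  then have closed: "capacity_nulls_union_closed M v"
    by (rule choquet_convex_imp_nulls_union_closed[OF bin])
  have v_atoms: "v A = (if A \<inter> capacity_atoms M v = {} then 0 else 1)" if "A \<in> sets M" for A
    using that points_null_imp_null[OF closed]
    by (intro binary_capacity_eq_atoms[OF bin]) (auto intro: countable_sets)
  have "v (space M) = 1"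
    using bin by (simp add: binary_capacity_def)
  then have "capacity_atoms M v \<noteq> {}"
    using v_atoms[OF sets.top] by (auto split: if_splits)
  moreover have "capacity_atoms M v \<subseteq> space M"
    by (auto simp: capacity_atoms_def)
  ultimately show "max_representable M v"
    using finite_capacity_atoms[OF bin cont countable_sets] v_atoms by (intro max_representableI)
qed (rule max_representable_imp_choquet_convex)

lemma choquet_convex_iff_max_representable_count_space:
  assumes "countable \<Omega>"
    and bin: "binary_capacity (count_space \<Omega>) v" and cont: "continuous_capacity (count_space \<Omega>) v"
  shows "choquet_convex (count_space \<Omega>) v \<longleftrightarrow> max_representable (count_space \<Omega>) v"
proof (rule choquet_convex_iff_max_representable[OF bin cont])
  fix A assume closed: "capacity_nulls_union_closed (count_space \<Omega>) v"
    and A: "A \<in> sets (count_space \<Omega>)" and points: "\<And>\<omega>. \<omega> \<in> A \<Longrightarrow> v {\<omega>} = 0"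
  have "countable A"
    using A \<open>countable \<Omega>\<close> by (simp add: countable_subset)
  then show "v A = 0"
    by (rule points_null_imp_null_countable[OF bin cont closed _ A _ points]) (use A in auto)
qed simp

lemma choquet_convex_iff_max_representable_compact:
  fixes K :: "'a::metric_space set"
  assumes "compact K"
    and bin: "binary_capacity (restrict_space borel K) v"
    and cont: "continuous_capacity (restrict_space borel K) v"
  shows "choquet_convex (restrict_space borel K) v \<longleftrightarrow> max_representable (restrict_space borel K) v"
proof (rule choquet_convex_iff_max_representable[OF bin cont])
  fix C assume "C \<subseteq> space (restrict_space borel K)" "countable C"
  then have "C \<subseteq> K"
    by (simp add: space_restrict_space)
  moreover have "C \<in> sets borel"
    using \<open>countable C\<close> by (rule sets.countable[rotated]) (simp add: borel_singleton)
  moreover have "K \<in> sets borel"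
    using \<open>compact K\<close> by (simp add: compact_imp_closed)
  ultimately show "C \<in> sets (restrict_space borel K)"
    by (simp add: sets_restrict_space_iff)
qed (rule points_null_imp_null_compact[OF \<open>compact K\<close> bin cont])

theorem proposition5:
  shows "(\<forall>(n::nat) v. binary_capacity (count_space {1..n}) v \<and>
              continuous_capacity (count_space {1..n}) v \<longrightarrow>
            (choquet_convex (count_space {1..n}) v \<longleftrightarrow>
             max_representable (count_space {1..n}) v))
       \<and> (\<forall>v. binary_capacity (count_space (UNIV::nat set)) v \<and>
              continuous_capacity (count_space (UNIV::nat set)) v \<longrightarrow>
            (choquet_convex (count_space (UNIV::nat set)) v \<longleftrightarrow>
             max_representable (count_space (UNIV::nat set)) v))
       \<and> (\<forall>v. binary_capacity (restrict_space borel {0..1::real}) v \<and>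
              continuous_capacity (restrict_space borel {0..1::real}) v \<longrightarrow>
            (choquet_convex (restrict_space borel {0..1::real}) v \<longleftrightarrow>
             max_representable (restrict_space borel {0..1::real}) v))"
  by (simp add: choquet_convex_iff_max_representable_count_space
      choquet_convex_iff_max_representable_compact)

end
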